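(* Let $\phi$ be the standard normal density, $\gamma(u)=\frac12e^{-|u|}$ the Laplace density, and $g=\phi*\gamma$. For $\alpha\in[0,1]$ and $x\in\mathbb{R}$, let $a(x)=\frac{\alpha g(x)}{(1-\alpha)\phi(x)+\alpha g(x)}$, $\gamma_x(u)=\phi(x-u)\gamma(u)/g(x)$, and let $\pi_\alpha(\cdot\mid x)=(1-a(x))\delta_0+a(x)\gamma_x(u)\,du$. Set $r_2(\alpha,0,x)=\int u^2\,d\pi_\alpha(u\mid x)$. Then there exists $C_0>0$ such that for all $x\in\mathbb{R}$ and all $\alpha\in[0,1]$, $r_2(\alpha,0,x)\ge C_0\alpha$.
   Context: $\pi_\alpha(\cdot\mid x)$ is the posterior distribution of a single coordinate $\theta$ given observation $x\sim\mathcal{N}(\theta,1)$ under the spike and slab prior $(1-\alpha)\delta_0+\alpha\,\mathrm{Lap}(1)$. *)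

theory Defs
  imports "HOL-Probability.Probability"
begin

definition laplace_density :: "real \<Rightarrow> real" where
  "laplace_density u = exp (- \<bar>u\<bar>) / 2"

definition g_conv :: "real \<Rightarrow> real" where
  "g_conv x = (LINT u|lborel. std_normal_density (x - u) * laplace_density u)"

definition post_weight :: "real \<Rightarrow> real \<Rightarrow> real" where
  "post_weight \<alpha> x = \<alpha> * g_conv x / ((1 - \<alpha>) * std_normal_density x + \<alpha> * g_conv x)"

definition gamma_post :: "real \<Rightarrow> real \<Rightarrow> real" where
  "gamma_post x u = std_normal_density (x - u) * laplace_density u / g_conv x"

text \<open>r_2(alpha,0,x) = second moment of pi_alpha(. | x) = (1-a(x)) delta_0 + a(x) gamma_x(u) du;
  the atom at 0 contributes (1 - a(x)) * 0^2.\<close>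
definition r2 :: "real \<Rightarrow> real \<Rightarrow> real" where
  "r2 \<alpha> x = (1 - post_weight \<alpha> x) * (0::real)^2
     + post_weight \<alpha> x * (LINT u|lborel. u^2 * gamma_post x u)"

end

theory Submission
  imports Defs
begin

text \<open>With \<open>N(x) = \<integral> u\<^sup>2 \<phi>(x - u) \<gamma>(u) du\<close> and \<open>D = (1 - \<alpha>) \<phi>(x) + \<alpha> g(x)\<close> one has
  \<open>r\<^sub>2(\<alpha>, 0, x) = \<alpha> N(x) / D\<close>. Both \<open>\<phi>(x)\<close> and \<open>g(x)\<close> are \<open>O(exp (-|x|))\<close>
  (for \<open>g\<close>, use \<open>-|u| \<le> -|x| + |x - u|\<close> and absorb \<open>exp |x - u|\<close> into the Gaussian),
  while \<open>N(x)\<close> is at least a constant times \<open>exp (-|x|)\<close>, as seen by integrating only over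
  a unit interval within distance 2 of \<open>x\<close> and at distance at least 1 from 0.\<close>

definition slab_moment2 :: "real \<Rightarrow> real" where
  "slab_moment2 x = (LINT u|lborel. u\<^sup>2 * (std_normal_density (x - u) * laplace_density u))"

lemma laplace_density_measurable [measurable]: "laplace_density \<in> borel_measurable borel"
  unfolding laplace_density_def by measurable

lemma laplace_density_nonneg: "0 \<le> laplace_density u"
  unfolding laplace_density_def by simp

lemma laplace_density_le_1: "laplace_density u \<le> 1"
proof -
  have "exp (- \<bar>u\<bar>) \<le> (1::real)"
    by simp
  then show ?thesis
    unfolding laplace_density_def by linarith
qed

lemma sq_mult_laplace_density_le: "u\<^sup>2 * laplace_density u \<le> 2"
proof -
  have "1 + \<bar>u\<bar>/2 \<le> exp (\<bar>u\<bar>/2)"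
    using exp_ge_add_one_self by simp
  hence "(1 + \<bar>u\<bar>/2)\<^sup>2 \<le> (exp (\<bar>u\<bar>/2))\<^sup>2"
    by (intro power_mono) auto
  hence "u\<^sup>2 \<le> 4 * exp \<bar>u\<bar>"
    by (simp add: power2_eq_square exp_add[symmetric] field_simps)
  hence "u\<^sup>2 * exp (-\<bar>u\<bar>) \<le> 4 * exp \<bar>u\<bar> * exp (-\<bar>u\<bar>)"
    by (intro mult_right_mono) auto
  then show ?thesis
    unfolding laplace_density_def by (simp add: exp_minus field_simps)
qed

lemma std_normal_density_le_exp_neg_abs: "std_normal_density x \<le> exp (1/2) * exp (-\<bar>x\<bar>)"
proof -
  have "- x\<^sup>2/2 \<le> 1/2 + - \<bar>x\<bar>"
    using sum_squares_ge_zero[of "\<bar>x\<bar> - 1" 0]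
    by (simp add: power2_eq_square algebra_simps abs_mult_self_eq)
  then have "exp (- x\<^sup>2/2) \<le> exp (1/2) * exp (-\<bar>x\<bar>)"
    by (simp add: exp_add[symmetric])
  moreover have "1 / sqrt (2*pi) \<le> 1"
    using pi_gt3 by (simp add: real_sqrt_ge_one)
  ultimately have "1 / sqrt (2*pi) * exp (- x\<^sup>2/2) \<le> 1 * (exp (1/2) * exp (-\<bar>x\<bar>))"
    by (intro mult_mono) auto
  then show ?thesis
    unfolding std_normal_density_def by simp
qed

lemma normal_laplace_product_le:
  "std_normal_density (x - u) * laplace_density u
     \<le> exp (-\<bar>x\<bar>) * (exp 1 / 2) * std_normal_density ((x - u) / sqrt 2)"
proof -
  have completed_square: "- v\<^sup>2/2 + \<bar>v\<bar> \<le> 1 + (- v\<^sup>2/4)" for v :: real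
    using sum_squares_ge_zero[of "\<bar>v\<bar> - 2" 0]
    by (simp add: power2_eq_square algebra_simps abs_mult_self_eq)
  have "exp (- (x-u)\<^sup>2/2) * exp (-\<bar>u\<bar>) \<le> exp (- (x-u)\<^sup>2/2) * (exp (- \<bar>x\<bar>) * exp \<bar>x-u\<bar>)"
    by (simp add: exp_add[symmetric])
  also have "\<dots> = exp (- \<bar>x\<bar>) * exp (- (x-u)\<^sup>2/2 + \<bar>x-u\<bar>)"
    by (simp add: exp_add[symmetric])
  also have "\<dots> \<le> exp (- \<bar>x\<bar>) * (exp 1 * exp (- (x-u)\<^sup>2/4))"
    using completed_square[of "x - u"] by (simp add: exp_add[symmetric])
  finally have bound: "exp (- (x-u)\<^sup>2/2) * exp (-\<bar>u\<bar>) \<le> exp (- \<bar>x\<bar>) * (exp 1 * exp (- (x-u)\<^sup>2/4))" .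
  have "((x-u)/sqrt 2)\<^sup>2 = (x-u)\<^sup>2/2"
    by (simp add: power_divide)
  then show ?thesis
    unfolding std_normal_density_def laplace_density_def
    using mult_left_mono[OF bound, of "1/(2 * sqrt (2*pi))"] by (simp add: field_simps)
qed

lemma normal_laplace_product_ge:
  assumes "\<bar>x - u\<bar> \<le> 2" "\<bar>u\<bar> \<le> \<bar>x\<bar> + 2"
  shows "exp (-4) / (2 * sqrt (2*pi)) * exp (-\<bar>x\<bar>) \<le> std_normal_density (x - u) * laplace_density u"
proof -
  have "(x-u)\<^sup>2 \<le> 2\<^sup>2"
    using assms(1) by (metis abs_le_square_iff abs_numeral)
  hence "exp (-2) \<le> exp (- (x-u)\<^sup>2/2)"
    by simp
  moreover have "exp (-2) * exp (-\<bar>x\<bar>) \<le> exp (-\<bar>u\<bar>)"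
    using assms(2) by (simp add: exp_add[symmetric])
  ultimately have "exp (-2) * (exp (-2) * exp (-\<bar>x\<bar>)) \<le> exp (- (x-u)\<^sup>2/2) * exp (-\<bar>u\<bar>)"
    by (intro mult_mono) auto
  moreover have "exp (-4::real) = exp (-2) * exp (-2)"
    by (simp add: exp_add[symmetric])
  ultimately show ?thesis
    unfolding std_normal_density_def laplace_density_def by (simp add: field_simps)
qed

lemma integrable_std_normal_density: "integrable lborel std_normal_density"
  using integrable_std_normal_moment[of 0] by simp

lemma integrable_std_normal_density_affine:
  "c \<noteq> 0 \<Longrightarrow> integrable lborel (\<lambda>u. std_normal_density (t + c * u))"
  using lborel_integrable_real_affine[OF integrable_std_normal_density] by simp

lemma integral_std_normal_density_scaled:
  "(LINT u|lborel. std_normal_density ((x - u) / sqrt 2)) = sqrt 2"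
  using lborel_integral_real_affine[of "-1/sqrt 2" std_normal_density "x/sqrt 2"]
    integral_std_normal_moment_even[of 0]
  by (simp add: diff_divide_distrib)

lemma integrable_normal_laplace_product:
  "integrable lborel (\<lambda>u. std_normal_density (x - u) * laplace_density u)"
  by (rule Bochner_Integration.integrable_bound[OF integrable_std_normal_density_affine[of "-1" x]])
     (auto simp: abs_mult laplace_density_nonneg normal_density_nonneg
           intro!: mult_left_le[OF laplace_density_le_1])

lemma integrable_sq_normal_laplace_product:
  "integrable lborel (\<lambda>u. u\<^sup>2 * (std_normal_density (x - u) * laplace_density u))"
proof (rule Bochner_Integration.integrable_bound)
  show "integrable lborel (\<lambda>u. 2 * std_normal_density (x - u))"
    using integrable_std_normal_density_affine[of "-1" x] by simp
  have "u\<^sup>2 * laplace_density u * std_normal_density (x - u) \<le> 2 * std_normal_density (x - u)" for u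
    by (intro mult_right_mono sq_mult_laplace_density_le) (simp add: normal_density_nonneg)
  then show "AE u in lborel. norm (u\<^sup>2 * (std_normal_density (x - u) * laplace_density u))
              \<le> norm (2 * std_normal_density (x - u))"
    by (simp add: abs_mult laplace_density_nonneg normal_density_nonneg mult_ac)
qed simp

lemma integral_ge_on_interval:
  fixes f :: "real \<Rightarrow> real"
  assumes "a \<le> b" "\<And>u. u \<in> {a..b} \<Longrightarrow> c \<le> f u" "\<And>u. 0 \<le> f u" "integrable lborel f"
  shows "c * (b - a) \<le> (LINT u|lborel. f u)"
proof -
  have "(LINT u|lborel. indicator {a..b} u * c) \<le> (LINT u|lborel. f u)"
    using assms by (intro integral_mono) (auto split: split_indicator)
  then show ?thesis
    using assms(1) by (simp add: mult.commute)
qed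

lemma unit_interval_near_away_from_zero:
  obtains a :: real where "\<And>u. u \<in> {a..a+1} \<Longrightarrow> \<bar>x - u\<bar> \<le> 2 \<and> 1 \<le> \<bar>u\<bar> \<and> \<bar>u\<bar> \<le> \<bar>x\<bar> + 2"
proof
  fix u assume "u \<in> {(if x \<ge> 0 then x + 1 else x - 2) .. (if x \<ge> 0 then x + 1 else x - 2) + 1}"
  then show "\<bar>x - u\<bar> \<le> 2 \<and> 1 \<le> \<bar>u\<bar> \<and> \<bar>u\<bar> \<le> \<bar>x\<bar> + 2"
    by (auto split: if_splits)
qed

lemma g_conv_and_slab_moment2_ge:
  fixes x :: real
  defines "c \<equiv> exp (-4) / (2 * sqrt (2*pi)) * exp (-\<bar>x\<bar>)"
  shows "c \<le> g_conv x" and "c \<le> slab_moment2 x"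
proof -
  define f where "f u = std_normal_density (x - u) * laplace_density u" for u
  have f_nonneg: "0 \<le> f u" for u
    unfolding f_def by (simp add: laplace_density_nonneg normal_density_nonneg)
  obtain a where near: "\<And>u. u \<in> {a..a+1} \<Longrightarrow> \<bar>x - u\<bar> \<le> 2 \<and> 1 \<le> \<bar>u\<bar> \<and> \<bar>u\<bar> \<le> \<bar>x\<bar> + 2"
    using unit_interval_near_away_from_zero[of x] by blast
  have f_ge: "c \<le> f u" if "u \<in> {a..a+1}" for u
    unfolding f_def c_def using near[OF that] normal_laplace_product_ge by auto
  have "c * ((a + 1) - a) \<le> (LINT u|lborel. f u)"
    using f_ge f_nonneg integrable_normal_laplace_product[of x]
    by (intro integral_ge_on_interval) (auto simp: f_def)
  then show "c \<le> g_conv x"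
    by (simp add: g_conv_def f_def)
  have "c \<le> u\<^sup>2 * f u" if "u \<in> {a..a+1}" for u
  proof -
    have "1 \<le> u\<^sup>2"
      using near[OF that] by (metis abs_le_square_iff abs_one one_power2)
    hence "1 * f u \<le> u\<^sup>2 * f u"
      by (intro mult_right_mono f_nonneg)
    then show ?thesis
      using f_ge[OF that] by simp
  qed
  then have "c * ((a + 1) - a) \<le> (LINT u|lborel. u\<^sup>2 * f u)"
    using f_nonneg integrable_sq_normal_laplace_product[of x]
    by (intro integral_ge_on_interval) (auto simp: f_def)
  then show "c \<le> slab_moment2 x"
    by (simp add: slab_moment2_def f_def)
qed

lemma g_conv_pos: "0 < g_conv x"
  by (rule less_le_trans[OF _ g_conv_and_slab_moment2_ge(1)]) simp

lemma g_conv_le: "g_conv x \<le> exp 1 / 2 * sqrt 2 * exp (-\<bar>x\<bar>)"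
proof -
  have "g_conv x \<le> (LINT u|lborel. exp (-\<bar>x\<bar>) * (exp 1 / 2) * std_normal_density ((x - u) / sqrt 2))"
    unfolding g_conv_def
    using integrable_std_normal_density_affine[of "-1/sqrt 2" "x/sqrt 2"]
      integrable_normal_laplace_product[of x] normal_laplace_product_le[of x]
    by (intro integral_mono) (auto simp: diff_divide_distrib)
  also have "\<dots> = exp 1 / 2 * sqrt 2 * exp (-\<bar>x\<bar>)"
    by (simp add: integral_std_normal_density_scaled)
  finally show ?thesis .
qed

lemma r2_eq:
  "r2 \<alpha> x = \<alpha> * slab_moment2 x / ((1 - \<alpha>) * std_normal_density x + \<alpha> * g_conv x)"
proof -
  have "(LINT u|lborel. u\<^sup>2 * gamma_post x u) = slab_moment2 x / g_conv x"
    unfolding slab_moment2_def gamma_post_def by (simp add: mult.assoc)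
  then show ?thesis
    unfolding r2_def post_weight_def using g_conv_pos[of x] by simp
qed

lemma posterior_normaliser_bounds:
  fixes x :: real
  assumes "\<alpha> \<in> {0..1}"
  defines "D \<equiv> (1 - \<alpha>) * std_normal_density x + \<alpha> * g_conv x"
  shows "0 < D" and "D \<le> (exp (1/2) + exp 1 / 2 * sqrt 2) * exp (-\<bar>x\<bar>)"
proof -
  have \<phi>_pos: "0 < std_normal_density x"
    by (simp add: std_normal_density_def)
  show "0 < D"
    unfolding D_def using assms(1) \<phi>_pos g_conv_pos[of x]
    by (cases "\<alpha> = 1") (auto intro!: add_pos_nonneg)
  have "D \<le> std_normal_density x + g_conv x"
    unfolding D_def using assms(1) \<phi>_pos g_conv_pos[of x]
    by (smt (verit, best) atLeastAtMost_iff mult_left_le_one_le mult_nonneg_nonneg)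
  also have "\<dots> \<le> (exp (1/2) + exp 1 / 2 * sqrt 2) * exp (-\<bar>x\<bar>)"
    using std_normal_density_le_exp_neg_abs[of x] g_conv_le[of x] by (simp add: algebra_simps)
  finally show "D \<le> (exp (1/2) + exp 1 / 2 * sqrt 2) * exp (-\<bar>x\<bar>)" .
qed

theorem lemma2:
  shows "\<exists>C0::real. C0 > 0 \<and> (\<forall>x::real. \<forall>\<alpha>\<in>{0..1::real}. r2 \<alpha> x \<ge> C0 * \<alpha>)"
proof (intro exI conjI allI ballI)
  define c where "c = exp (-4) / (2 * sqrt (2*pi))"
  define K where "K = exp (1/2) + exp 1 / 2 * sqrt (2::real)"
  have "0 < c" "0 < K"
    unfolding c_def K_def by (simp_all add: add_pos_pos)
  then show "0 < c / K"
    by simp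
  fix x \<alpha> :: real
  assume \<alpha>: "\<alpha> \<in> {0..1}"
  define D where "D = (1 - \<alpha>) * std_normal_density x + \<alpha> * g_conv x"
  have "0 < D" and "D \<le> K * exp (-\<bar>x\<bar>)"
    using posterior_normaliser_bounds[OF \<alpha>, of x] unfolding D_def K_def by auto
  then have "c / K * D \<le> c * exp (-\<bar>x\<bar>)"
    using \<open>0 < c\<close> \<open>0 < K\<close> by (simp add: field_simps mult_left_mono)
  also have "\<dots> \<le> slab_moment2 x"
    using g_conv_and_slab_moment2_ge(2)[of x] unfolding c_def by simp
  finally have "c / K * D \<le> slab_moment2 x" .
  then have "\<alpha> * (c / K * D) \<le> \<alpha> * slab_moment2 x"
    using \<alpha> by (intro mult_left_mono) auto
  then show "c / K * \<alpha> \<le> r2 \<alpha> x"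
    unfolding r2_eq D_def[symmetric] using \<open>0 < D\<close> by (simp add: field_simps)
qed

end
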